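(* Fix $n\ge1$, $\tilde J>0$, an integer $0\le m\le n-1$ and $\alpha\in(0,1)$, and let $h=\tilde J(n-m-\alpha)$. For $N\ge2$ let $J_i=\tilde J/N^i$, $1\le i\le n$. Then $$\Gamma^\star=\big[1+o_N(1)\big]\,\frac{\tilde J}{4}\,\alpha^2\,N^{m+1},\qquad N\to\infty.$$
   Context: Hierarchical lattice $\Lambda_N^n=\{1,\dots,N^n\}$; $k$-blocks are $\{jN^k+1,\dots,(j+1)N^k\}$; $d(a,b)$ is the smallest $k\ge0$ with $a,b$ in a common $k$-block. Configurations $\sigma\in\{-1,+1\}^{\Lambda_N^n}$, $\boxminus\equiv-1$, $\boxplus\equiv+1$. Hamiltonian $\mathcal H(\sigma)=-\frac12\sum_{\{v,w\},v\ne w}J_{d(v,w)}\sigma(v)\sigma(w)-\frac h2\sum_v\sigma(v)$ (sum over unordered pairs of distinct vertices). Paths consist of single spin flips; $\Phi(\sigma,\eta)=\min_{\text{paths }\sigma\to\eta}\max_{\xi\in\text{path}}\mathcal H(\xi)$; $\Gamma^\star=\Phi(\boxminus,\boxplus)-\mathcal H(\boxminus)$. *)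

theory Defs
  imports Complex_Main "HOL-Library.Landau_Symbols"
begin

text \<open>Hierarchical lattice {1..N^n}; a configuration is represented by the set of
  sites carrying spin +1 (all other sites of the lattice carry spin -1).\<close>

definition lattice :: "nat \<Rightarrow> nat \<Rightarrow> nat set" where
  "lattice N n = {1..N ^ n}"

definition kblock :: "nat \<Rightarrow> nat \<Rightarrow> nat \<Rightarrow> nat set" where
  "kblock N k j = {j * N ^ k + 1 .. (j + 1) * N ^ k}"

definition hdist :: "nat \<Rightarrow> nat \<Rightarrow> nat \<Rightarrow> nat" where
  "hdist N a b = (LEAST k. \<exists>j. a \<in> kblock N k j \<and> b \<in> kblock N k j)"

definition spin :: "nat set \<Rightarrow> nat \<Rightarrow> real" where
  "spin A v = (if v \<in> A then 1 else -1)"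

text \<open>Hamiltonian; sum over unordered pairs of distinct vertices (encoded as v < w).\<close>
definition Ham :: "nat \<Rightarrow> nat \<Rightarrow> (nat \<Rightarrow> real) \<Rightarrow> real \<Rightarrow> nat set \<Rightarrow> real" where
  "Ham N n J h A =
     - (1/2) * (\<Sum>(v,w)\<in>{(v,w). v \<in> lattice N n \<and> w \<in> lattice N n \<and> v < w}.
                   J (hdist N v w) * spin A v * spin A w)
     - (h/2) * (\<Sum>v\<in>lattice N n. spin A v)"

definition is_path :: "nat \<Rightarrow> nat \<Rightarrow> nat set \<Rightarrow> nat set \<Rightarrow> nat set list \<Rightarrow> bool" where
  "is_path N n A B p \<longleftrightarrow> p \<noteq> [] \<and> hd p = A \<and> last p = B \<and>
     (\<forall>C\<in>set p. C \<subseteq> lattice N n) \<and>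
     (\<forall>i. Suc i < length p \<longrightarrow>
        (\<exists>v\<in>lattice N n. p ! Suc i = p ! i - {v} \<union> ({v} - p ! i)))"

definition Phi :: "nat \<Rightarrow> nat \<Rightarrow> (nat \<Rightarrow> real) \<Rightarrow> real \<Rightarrow> nat set \<Rightarrow> nat set \<Rightarrow> real" where
  "Phi N n J h A B = Inf {Max (Ham N n J h ` set p) | p. is_path N n A B p}"

definition Gamma_star :: "nat \<Rightarrow> nat \<Rightarrow> (nat \<Rightarrow> real) \<Rightarrow> real \<Rightarrow> real" where
  "Gamma_star N n J h = Phi N n J h {} (lattice N n) - Ham N n J h {}"

end

theory Submission
  imports Defs
begin

text \<open>Write the energy of the configuration with plus set A as
  H(A) - H(all minus) = (sum over v in A, w not in A of J(d(v,w))) - h |A|,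
  and split the coupling J(d) = Jt N^-d into the nested layers Jt N^-k (1 - 1/N), k \<ge> d.
  The k-ball around a site is a k-block of N^k sites, so a set A of at most N^(m+1) sites pays,
  per site and per level k > m, about Jt (1 - |A|/N^k); hence
  H(A) - H(all minus) \<ge> Jt |A| (\<alpha> - |A|/N^(m+1) - O(1/N)). Every single spin flip path from
  all minus to all plus passes through a configuration with |A| close to \<alpha> N^(m+1)/2, which gives
  the lower bound.

  For the upper bound, follow the path of initial segments {1..a}: the bonds of length at most k
  leaving {1..a} lie in a single k-block, so there are at most r (N^k - r) of them, r = a mod N^k.
  Levels k \<le> m contribute O(m N^m), level m + 1 together with its share of the field contributes
  at most Jt (\<alpha> r - r^2/N^(m+1)) \<le> Jt \<alpha>^2 N^(m+1)/4, and the higher levels are paid for by the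
  field.\<close>

section \<open>Hierarchical distance\<close>

lemma kblock_iff:
  assumes "N \<ge> 1" "v \<ge> 1"
  shows "v \<in> kblock N k j \<longleftrightarrow> (v - 1) div N ^ k = j"
proof -
  have pos: "N ^ k > 0" using assms(1) by simp
  have "(v - 1) div N ^ k = j \<longleftrightarrow> j \<le> (v - 1) div N ^ k \<and> (v - 1) div N ^ k < Suc j"
    by linarith
  also have "\<dots> \<longleftrightarrow> j * N ^ k \<le> v - 1 \<and> v - 1 < Suc j * N ^ k"
    by (simp only: less_eq_div_iff_mult_less_eq[OF pos] div_less_iff_less_mult[OF pos])
  also have "\<dots> \<longleftrightarrow> v \<in> kblock N k j"
    using assms(2) unfolding kblock_def by auto
  finally show ?thesis ..
qed

lemma div_power_eq_mono:
  fixes x y N :: nat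
  assumes "x div N ^ k = y div N ^ k" "k \<le> k'"
  shows "x div N ^ k' = y div N ^ k'"
proof -
  have "N ^ k' = N ^ k * N ^ (k' - k)"
    using assms(2) by (metis le_add_diff_inverse power_add)
  then show ?thesis using assms(1) by (simp only: div_mult2_eq)
qed

lemma hdist_le_iff:
  assumes "N \<ge> 2" "v \<ge> 1" "w \<ge> 1"
  shows "hdist N v w \<le> k \<longleftrightarrow> (v - 1) div N ^ k = (w - 1) div N ^ k"
proof -
  let ?P = "\<lambda>k. (v - 1) div N ^ k = (w - 1) div N ^ k"
  have "hdist N v w = (LEAST k. ?P k)"
    using kblock_iff[of N v] kblock_iff[of N w] assms unfolding hdist_def by (simp add: eq_commute)
  moreover have "?P (v + w)"
  proof -
    have "v + w < 2 ^ (v + w)" by (rule less_exp)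
    also have "\<dots> \<le> N ^ (v + w)" using assms(1) by (simp add: power_mono)
    finally show ?thesis by simp
  qed
  then have "?P (LEAST k. ?P k)" by (rule LeastI)
  ultimately show ?thesis
    using Least_le[of ?P k] div_power_eq_mono[of "v - 1" N "LEAST k. ?P k" "w - 1" k] by auto
qed

lemma finite_lattice [simp]: "finite (lattice N n)"
  by (simp add: lattice_def)

lemma hdist_sym: "hdist N v w = hdist N w v"
  unfolding hdist_def by (simp add: conj_commute)

lemma hdist_ge_1:
  assumes "N \<ge> 2" "v \<ge> 1" "w \<ge> 1" "v \<noteq> w"
  shows "hdist N v w \<ge> 1"
proof -
  have "\<not> hdist N v w \<le> 0"
    using hdist_le_iff[OF assms(1-3), of 0] assms(2-4) by simp
  then show ?thesis by simp
qed

lemma hdist_le_height: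
  assumes "N \<ge> 2" "v \<in> lattice N n" "w \<in> lattice N n"
  shows "hdist N v w \<le> n"
proof -
  have "v \<ge> 1" "v - 1 < N ^ n" "w \<ge> 1" "w - 1 < N ^ n"
    using assms(2,3) unfolding lattice_def by auto
  then show ?thesis using hdist_le_iff[OF assms(1)] by simp
qed

lemma ball_eq_kblock:
  assumes "N \<ge> 2" "v \<in> lattice N n" "k \<le> n"
  shows "{w \<in> lattice N n. hdist N v w \<le> k} = kblock N k ((v - 1) div N ^ k)"
proof -
  let ?j = "(v - 1) div N ^ k"
  have N: "N \<ge> 1" using assms(1) by simp
  have v: "v \<ge> 1" "v - 1 < N ^ n"
    using assms(2) unfolding lattice_def by auto
  have n: "N ^ n = N ^ (n - k) * N ^ k"
    using assms(3) by (metis le_add_diff_inverse2 power_add)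
  then have "?j < N ^ (n - k)"
    using v(2) by (metis less_mult_imp_div_less)
  then have "Suc ?j * N ^ k \<le> N ^ n"
    unfolding n by (intro mult_le_mono1) simp
  then have sub: "kblock N k ?j \<subseteq> lattice N n"
    unfolding kblock_def lattice_def by auto
  have iff: "w \<in> kblock N k ?j \<longleftrightarrow> hdist N v w \<le> k" if "w \<ge> 1" for w
    unfolding kblock_iff[OF N that] hdist_le_iff[OF assms(1) v(1) that] by auto
  show ?thesis
  proof (intro set_eqI iffI)
    fix w assume "w \<in> {w \<in> lattice N n. hdist N v w \<le> k}"
    then show "w \<in> kblock N k ?j" using iff[of w] by (auto simp: lattice_def)
  next
    fix w assume w: "w \<in> kblock N k ?j"
    then have "w \<in> lattice N n" using sub by blast
    then show "w \<in> {w \<in> lattice N n. hdist N v w \<le> k}" using iff[of w] w by (auto simp: lattice_def)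
  qed
qed

lemma card_ball:
  assumes "N \<ge> 2" "v \<in> lattice N n" "k \<le> n"
  shows "card {w \<in> lattice N n. hdist N v w \<le> k} = N ^ k"
  unfolding ball_eq_kblock[OF assms] kblock_def by simp

lemma bij_betw_sort_pair:
  fixes A L :: "'a::linorder set"
  assumes "A \<subseteq> L"
  shows "bij_betw (\<lambda>(v, w). (min v w, max v w)) (A \<times> (L - A))
           {x \<in> {(v, w). v \<in> L \<and> w \<in> L \<and> v < w}. (fst x \<in> A) \<noteq> (snd x \<in> A)}"
proof (rule bij_betwI')
  fix x y assume "x \<in> A \<times> (L - A)" "y \<in> A \<times> (L - A)"
  then show "((\<lambda>(v, w). (min v w, max v w)) x = (\<lambda>(v, w). (min v w, max v w)) y) = (x = y)"
    by (cases x; cases y) (auto simp: min_def max_def split: if_splits)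
next
  fix x assume "x \<in> A \<times> (L - A)"
  then obtain v w where "x = (v, w)" "v \<in> A" "w \<in> L - A" by blast
  moreover have "v \<noteq> w" using calculation by blast
  ultimately show "(\<lambda>(v, w). (min v w, max v w)) x \<in> {x \<in> {(v, w). v \<in> L \<and> w \<in> L \<and> v < w}. (fst x \<in> A) \<noteq> (snd x \<in> A)}"
    using assms by (auto simp: min_def max_def less_le)
next
  fix y assume "y \<in> {x \<in> {(v, w). v \<in> L \<and> w \<in> L \<and> v < w}. (fst x \<in> A) \<noteq> (snd x \<in> A)}"
  then obtain v w where y: "y = (v, w)" "v \<in> L" "w \<in> L" "v < w" "(v \<in> A) \<noteq> (w \<in> A)" by auto
  show "\<exists>x\<in>A \<times> (L - A). y = (\<lambda>(v, w). (min v w, max v w)) x"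
  proof (cases "v \<in> A")
    case True
    then show ?thesis using y by (intro bexI[of _ "(v, w)"]) auto
  next
    case False
    then show ?thesis using y by (intro bexI[of _ "(w, v)"]) auto
  qed
qed

lemma Ham_diff_empty:
  assumes "A \<subseteq> lattice N n"
  shows "Ham N n J h A - Ham N n J h {} =
         (\<Sum>(v, w)\<in>A \<times> (lattice N n - A). J (hdist N v w)) - h * card A"
proof -
  define L where "L = lattice N n"
  define P where "P = {(v, w). v \<in> L \<and> w \<in> L \<and> v < w}"
  define g where "g = (\<lambda>(v, w). J (hdist N v w))"
  define B where "B = {x \<in> P. (fst x \<in> A) \<noteq> (snd x \<in> A)}"
  have fin: "finite L" "finite P"
    unfolding L_def P_def by (auto intro: finite_subset[of _ "lattice N n \<times> lattice N n"])
  have field: "(\<Sum>v\<in>L. spin A v) - (\<Sum>v\<in>L. spin {} v) = 2 * card A"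
  proof -
    have "(\<Sum>v\<in>L. spin A v) - (\<Sum>v\<in>L. spin {} v) = (\<Sum>v\<in>L. if v \<in> A then 2 else 0)"
      unfolding sum_subtractf[symmetric] by (intro sum.cong) (auto simp: spin_def)
    also have "\<dots> = 2 * card A"
      using assms fin(1) by (simp add: sum.If_cases L_def Int_absorb1)
    finally show ?thesis .
  qed
  have bonds: "(\<Sum>(v, w)\<in>P. J (hdist N v w) * spin A v * spin A w)
      - (\<Sum>(v, w)\<in>P. J (hdist N v w) * spin {} v * spin {} w) = -2 * sum g B"
  proof -
    have "(\<Sum>(v, w)\<in>P. J (hdist N v w) * spin A v * spin A w)
        - (\<Sum>(v, w)\<in>P. J (hdist N v w) * spin {} v * spin {} w)
        = (\<Sum>x\<in>P. -2 * (if (fst x \<in> A) \<noteq> (snd x \<in> A) then g x else 0))"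
      unfolding sum_subtractf[symmetric] by (intro sum.cong) (auto simp: spin_def g_def)
    also have "\<dots> = -2 * sum g B"
      unfolding B_def sum.inter_filter[OF fin(2)] sum_distrib_left ..
    finally show ?thesis .
  qed
  \<comment> \<open>sorting the two endpoints matches each boundary bond with exactly one unordered pair\<close>
  have "bij_betw (\<lambda>(v, w). (min v w, max v w)) (A \<times> (L - A)) B"
    unfolding B_def P_def using bij_betw_sort_pair assms L_def by blast
  then have "sum g B = (\<Sum>(v, w)\<in>A \<times> (L - A). g (min v w, max v w))"
    by (simp add: sum.reindex_bij_betw[symmetric] case_prod_beta)
  also have "\<dots> = sum g (A \<times> (L - A))"
    by (intro sum.cong) (auto simp: g_def min_def max_def hdist_sym)
  finally have "sum g B = sum g (A \<times> (L - A))" .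
  then show ?thesis
    using field bonds unfolding Ham_def P_def L_def g_def by (simp add: algebra_simps)
qed

section \<open>Lower bound on the energy of small droplets\<close>

lemma sum_threshold_swap:
  fixes c :: "nat \<Rightarrow> real"
  assumes "finite S"
  shows "(\<Sum>x\<in>S. \<Sum>k\<in>K. if d x \<le> k then c k else 0) = (\<Sum>k\<in>K. c k * card {x \<in> S. d x \<le> k})"
proof -
  have "(\<Sum>x\<in>S. if d x \<le> k then c k else 0) = c k * card {x \<in> S. d x \<le> k}" for k
    using sum.inter_filter[OF assms, of "\<lambda>_. c k" "\<lambda>x. d x \<le> k"] by (simp add: mult.commute)
  then show ?thesis by (subst sum.swap) simp
qed

lemma sum_geometric_layers_le:
  fixes x :: real
  assumes "0 \<le> x" "x \<le> 1"
  shows "(\<Sum>k\<in>{a..b}. if d \<le> k then x ^ k * (1 - x) else 0) \<le> x ^ d"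
proof -
  have "(\<Sum>k\<in>{a..b}. if d \<le> k then x ^ k * (1 - x) else 0) = (\<Sum>k\<in>{k \<in> {a..b}. d \<le> k}. x ^ k * (1 - x))"
    by (rule sum.inter_filter[symmetric]) simp
  also have "\<dots> \<le> (\<Sum>k\<in>{d..b}. x ^ k * (1 - x))"
    using assms by (intro sum_mono2) auto
  also have "\<dots> \<le> x ^ d"
  proof (cases "d \<le> b")
    case True
    have "(\<Sum>k\<in>{d..b}. x ^ k * (1 - x)) = (1 - x) * (\<Sum>k\<in>{d..b}. x ^ k)"
      by (simp add: sum_distrib_left mult.commute)
    also have "\<dots> = x ^ d - x ^ Suc b"
      by (rule sum_gp_multiplied[OF True])
    finally show ?thesis using assms by simp
  qed (simp add: assms)
  finally show ?thesis .
qed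

lemma layer_factor_lower:
  fixes N a :: real
  assumes "N \<ge> 1" "0 \<le> a" "a \<le> N ^ (m + 1)" "m + 1 \<le> k"
  shows "(if k = m + 1 then 1 - a / N ^ (m + 1) else 1) - 2 / N \<le> (1 - 1 / N) * (1 - a / N ^ k)"
proof -
  define t where "t = a / N ^ k"
  have t: "t \<le> (if k = m + 1 then a / N ^ (m + 1) else 1 / N)"
  proof (cases "k = m + 1")
    case False
    then have "N ^ Suc (m + 1) \<le> N ^ k"
      using assms(1,4) by (intro power_increasing) auto
    then have "t \<le> N ^ (m + 1) / N ^ Suc (m + 1)"
      unfolding t_def using assms(1-3) by (intro frac_le) auto
    then show ?thesis using False assms(1) by simp
  qed (simp add: t_def)
  have "0 \<le> t / N" "0 \<le> 1 / N"
    using assms(1,2) unfolding t_def by simp_all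
  moreover have "(1 - 1 / N) * (1 - t) = 1 - t - 1 / N + t / N"
    using assms(1) by (simp add: field_simps)
  moreover have "(if k = m + 1 then 1 - a / N ^ (m + 1) else 1) - 2 / N \<le> 1 - t - 2 / N + 1 / N"
  proof (cases "k = m + 1")
    case True
    then show ?thesis using t \<open>0 \<le> 1 / N\<close> unfolding if_P[OF True] by linarith
  next
    case False
    then show ?thesis using t unfolding if_not_P[OF False] by linarith
  qed
  ultimately show ?thesis
    unfolding t_def by linarith
qed

lemma sum_layer_factors_lower:
  fixes N a :: real
  assumes "N \<ge> 1" "0 \<le> a" "a \<le> N ^ (m + 1)" "m + 1 \<le> n"
  shows "real n - real m - a / N ^ (m + 1) - 2 * real n / N \<le> (\<Sum>k = m + 1..n. (1 - 1 / N) * (1 - a / N ^ k))"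
proof -
  have "real n - real m - a / N ^ (m + 1) - 2 * real n / N
      \<le> (real n - real m) * (1 - 2 / N) - a / N ^ (m + 1)"
    using assms(1) by (simp add: field_simps)
  also have "\<dots> = (\<Sum>k = m + 1..n. (1 - 2 / N) - (if k = m + 1 then a / N ^ (m + 1) else 0))"
    using assms(4) by (simp add: sum_subtractf of_nat_diff)
  also have "\<dots> = (\<Sum>k = m + 1..n. (if k = m + 1 then 1 - a / N ^ (m + 1) else 1) - 2 / N)"
    by (intro sum.cong) auto
  also have "\<dots> \<le> (\<Sum>k = m + 1..n. (1 - 1 / N) * (1 - a / N ^ k))"
    using assms(1-3) by (intro sum_mono layer_factor_lower) auto
  finally show ?thesis .
qed

lemma card_ball_diff_ge:
  assumes N: "N \<ge> 2" and A: "A \<subseteq> lattice N n" and "v \<in> A" "k \<le> n"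
  shows "real N ^ k - card A \<le> card {w \<in> lattice N n - A. hdist N v w \<le> k}"
proof -
  let ?B = "{w \<in> lattice N n. hdist N v w \<le> k}"
  have "finite A" using A by (rule finite_subset) simp
  then have "card ?B - card A \<le> card (?B - A)"
    by (rule diff_card_le_card_Diff)
  moreover have "?B - A = {w \<in> lattice N n - A. hdist N v w \<le> k}" by blast
  moreover have "card ?B = N ^ k"
    using card_ball[OF N _ \<open>k \<le> n\<close>] assms(3) A by blast
  ultimately have "real (N ^ k - card A) \<le> card {w \<in> lattice N n - A. hdist N v w \<le> k}" by simp
  moreover have "real N ^ k - card A \<le> real (N ^ k - card A)"
    by (cases "card A \<le> N ^ k") (auto simp: of_nat_diff)
  ultimately show ?thesis by linarith
qed

lemma boundary_sum_at_vertex_lower: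
  fixes Jt :: real
  assumes N: "N \<ge> 2" and A: "A \<subseteq> lattice N n" "card A \<le> N ^ (m + 1)"
    and mn: "m + 1 \<le> n" and v: "v \<in> A" and Jt: "Jt > 0"
  shows "Jt * (real n - real m - card A / real N ^ (m + 1) - 2 * real n / real N)
         \<le> (\<Sum>w\<in>lattice N n - A. Jt / real N ^ hdist N v w)"
proof -
  define L where "L = lattice N n"
  define a where "a = real (card A)"
  define c where "c k = Jt / real N ^ k * (1 - 1 / real N)" for k
  have Nr: "real N \<ge> 2" using N by simp
  have c_nonneg: "c k \<ge> 0" for k
    unfolding c_def using Nr Jt by (simp add: field_simps)
  have a_le: "a \<le> real N ^ (m + 1)"
    using A(2) unfolding a_def by (metis of_nat_le_iff of_nat_power)
  \<comment> \<open>the coupling at distance d dominates the telescoping layers of levels d, ..., n\<close>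
  have layers: "(\<Sum>k = m + 1..n. if d \<le> k then c k else 0) \<le> Jt / real N ^ d" for d
  proof -
    have "(\<Sum>k = m + 1..n. if d \<le> k then c k else 0)
        = Jt * (\<Sum>k = m + 1..n. if d \<le> k then (1 / real N) ^ k * (1 - 1 / real N) else 0)"
      unfolding sum_distrib_left by (intro sum.cong) (auto simp: c_def power_one_over)
    also have "\<dots> \<le> Jt * (1 / real N) ^ d"
      using Jt Nr by (intro mult_left_mono sum_geometric_layers_le) auto
    finally show ?thesis by (simp add: power_one_over)
  qed
  have "Jt * (real n - real m - a / real N ^ (m + 1) - 2 * real n / real N)
      \<le> Jt * (\<Sum>k = m + 1..n. (1 - 1 / real N) * (1 - a / real N ^ k))"
    using Jt Nr a_le mn unfolding a_def by (intro mult_left_mono sum_layer_factors_lower) auto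
  also have "\<dots> = (\<Sum>k = m + 1..n. c k * (real N ^ k - a))"
    unfolding sum_distrib_left c_def using Nr by (intro sum.cong) (auto simp: field_simps)
  also have "\<dots> \<le> (\<Sum>k = m + 1..n. c k * card {w \<in> L - A. hdist N v w \<le> k})"
    using card_ball_diff_ge[OF N A(1) v] c_nonneg unfolding L_def a_def
    by (intro sum_mono mult_left_mono) auto
  also have "\<dots> = (\<Sum>w\<in>L - A. \<Sum>k = m + 1..n. if hdist N v w \<le> k then c k else 0)"
    by (rule sum_threshold_swap[symmetric]) (simp add: L_def)
  also have "\<dots> \<le> (\<Sum>w\<in>L - A. Jt / real N ^ hdist N v w)"
    by (intro sum_mono layers)
  finally show ?thesis unfolding L_def a_def .
qed

lemma Ham_diff_lower:
  fixes Jt \<alpha> :: real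
  assumes N: "N \<ge> 2" and A: "A \<subseteq> lattice N n" "card A \<le> N ^ (m + 1)"
    and mn: "m + 1 \<le> n" and Jt: "Jt > 0"
  shows "Jt * card A * (\<alpha> - card A / real N ^ (m + 1) - 2 * real n / real N)
    \<le> Ham N n (\<lambda>i. Jt / real N ^ i) (Jt * (real n - real m - \<alpha>)) A
       - Ham N n (\<lambda>i. Jt / real N ^ i) (Jt * (real n - real m - \<alpha>)) {}"
proof -
  let ?lo = "Jt * (real n - real m - card A / real N ^ (m + 1) - 2 * real n / real N)"
  have "card A * ?lo = (\<Sum>v\<in>A. ?lo)"
    by simp
  also have "\<dots> \<le> (\<Sum>v\<in>A. \<Sum>w\<in>lattice N n - A. Jt / real N ^ hdist N v w)"
    using boundary_sum_at_vertex_lower[OF N A mn] Jt by (intro sum_mono) blast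
  also have "\<dots> = (\<Sum>(v, w)\<in>A \<times> (lattice N n - A). Jt / real N ^ hdist N v w)"
    by (rule sum.cartesian_product)
  finally show ?thesis
    unfolding Ham_diff_empty[OF A(1)] by (simp add: algebra_simps)
qed

section \<open>Upper bound along initial segments\<close>

lemma card_short_boundary_pairs:
  assumes N: "N \<ge> 2"
  shows "card {x \<in> {1..a} \<times> (lattice N n - {1..a}). hdist N (fst x) (snd x) \<le> k}
         \<le> (a mod N ^ k) * (N ^ k - a mod N ^ k)"
proof -
  define r where "r = a mod N ^ k"
  define q where "q = a div N ^ k"
  have a: "a = q * N ^ k + r"
    unfolding q_def r_def by (rule div_mult_mod_eq[symmetric])
  have "r < N ^ k"
    unfolding r_def using N by simp
  \<comment> \<open>a short bond across the cut between a and a + 1 stays inside the k-block of a + 1\<close>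
  have "{x \<in> {1..a} \<times> (lattice N n - {1..a}). hdist N (fst x) (snd x) \<le> k}
      \<subseteq> {a - r + 1..a} \<times> {a + 1..a - r + N ^ k}"
  proof
    fix x assume "x \<in> {x \<in> {1..a} \<times> (lattice N n - {1..a}). hdist N (fst x) (snd x) \<le> k}"
    then obtain v w where x: "x = (v, w)" and v: "1 \<le> v" "v \<le> a"
      and w: "w \<in> lattice N n" "a < w" and d: "hdist N v w \<le> k"
      by (cases x) (auto simp: lattice_def)
    have "w \<ge> 1" using w(1) by (simp add: lattice_def)
    then have same: "(v - 1) div N ^ k = (w - 1) div N ^ k"
      using hdist_le_iff[OF N v(1)] d by simp
    have "(v - 1) div N ^ k \<le> q" "q \<le> (w - 1) div N ^ k"
      unfolding q_def using v w by (auto intro: div_le_mono)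
    then have "(v - 1) div N ^ k = q" "(w - 1) div N ^ k = q"
      using same by auto
    then have "q * N ^ k \<le> v - 1" "w - 1 < Suc q * N ^ k"
      using div_less_iff_less_mult[of "N ^ k" "w - 1" "Suc q"]
        less_eq_div_iff_mult_less_eq[of "N ^ k" q "v - 1"] N by auto
    then show "x \<in> {a - r + 1..a} \<times> {a + 1..a - r + N ^ k}"
      using a x v w by auto
  qed
  then have "card {x \<in> {1..a} \<times> (lattice N n - {1..a}). hdist N (fst x) (snd x) \<le> k}
      \<le> card ({a - r + 1..a} \<times> {a + 1..a - r + N ^ k})"
    by (intro card_mono) auto
  also have "\<dots> = r * (N ^ k - r)"
    using a \<open>r < N ^ k\<close> by (simp add: card_cartesian_product)
  finally show ?thesis unfolding r_def .
qed

text \<open>By \<open>card_short_boundary_pairs\<close>, at most \<open>cut_layer N k a * N ^ k\<close> bonds of length at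
  most k leave the segment {1..a}.\<close>
definition cut_layer :: "nat \<Rightarrow> nat \<Rightarrow> nat \<Rightarrow> real" where
  "cut_layer N k a = real (a mod N ^ k) * (real N ^ k - real (a mod N ^ k)) / real N ^ k"

lemma segment_boundary_sum_le_cut_layers:
  fixes Jt :: real
  assumes N: "N \<ge> 2" and an: "a \<le> N ^ n" and Jt: "Jt \<ge> 0"
  shows "(\<Sum>(v, w)\<in>{1..a} \<times> (lattice N n - {1..a}). Jt / real N ^ hdist N v w)
     \<le> Jt * (\<Sum>k = 1..n. cut_layer N k a)"
proof -
  define S where "S = {1..a} \<times> (lattice N n - {1..a})"
  define d where "d x = hdist N (fst x) (snd x)" for x
  define c where "c k = Jt / real N ^ k" for k
  have "finite S" unfolding S_def by simp
  have d_range: "d x \<in> {1..n}" if "x \<in> S" for x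
  proof -
    have "fst x \<in> lattice N n" "snd x \<in> lattice N n" "fst x \<noteq> snd x"
      using that an unfolding S_def lattice_def by auto
    then show ?thesis
      unfolding d_def using hdist_ge_1[OF N] hdist_le_height[OF N] by (auto simp: lattice_def)
  qed
  have layer: "c k * card {x \<in> S. d x \<le> k} \<le> Jt * cut_layer N k a" for k
  proof -
    have mod_le: "a mod N ^ k \<le> N ^ k"
      using N by (simp add: less_imp_le)
    have "card {x \<in> S. d x \<le> k} \<le> (a mod N ^ k) * (N ^ k - a mod N ^ k)"
      unfolding S_def d_def by (rule card_short_boundary_pairs[OF N])
    then have "real (card {x \<in> S. d x \<le> k}) \<le> real ((a mod N ^ k) * (N ^ k - a mod N ^ k))"
      by (simp only: of_nat_le_iff)
    then have "c k * card {x \<in> S. d x \<le> k} \<le> c k * real ((a mod N ^ k) * (N ^ k - a mod N ^ k))"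
      using Jt unfolding c_def by (intro mult_left_mono) auto
    also have "\<dots> = Jt * cut_layer N k a"
      unfolding c_def cut_layer_def using mod_le by (simp add: of_nat_diff)
    finally show ?thesis .
  qed
  have "(\<Sum>x\<in>S. Jt / real N ^ d x) \<le> (\<Sum>x\<in>S. \<Sum>k = 1..n. if d x \<le> k then c k else 0)"
  proof (intro sum_mono)
    fix x assume "x \<in> S"
    then have "(if d x \<le> d x then c (d x) else 0) \<le> (\<Sum>k = 1..n. if d x \<le> k then c k else 0)"
      using d_range Jt by (intro member_le_sum) (auto simp: c_def)
    then show "Jt / real N ^ d x \<le> (\<Sum>k = 1..n. if d x \<le> k then c k else 0)"
      by (simp add: c_def)
  qed
  also have "\<dots> = (\<Sum>k = 1..n. c k * card {x \<in> S. d x \<le> k})"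
    using \<open>finite S\<close> by (rule sum_threshold_swap)
  also have "\<dots> \<le> (\<Sum>k = 1..n. Jt * cut_layer N k a)"
    using layer by (rule sum_mono)
  finally show ?thesis
    unfolding S_def d_def by (simp add: case_prod_beta sum_distrib_left)
qed

lemma sum_cut_layers_le:
  assumes N: "N \<ge> 2" and mn: "m + 1 \<le> n"
  shows "(\<Sum>k = 1..n. cut_layer N k a)
     \<le> real m * real N ^ m + cut_layer N (m + 1) a + (real n - real m - 1) * a"
proof -
  define b where "b k = (if k \<le> m then real N ^ m else if k = m + 1 then cut_layer N (m + 1) a else a)" for k
  have "cut_layer N k a \<le> b k" for k
  proof -
    define P where "P = real N ^ k"
    define r where "r = real (a mod N ^ k)"
    have "real N \<ge> 2" using N by simp
    then have P: "P > 0" unfolding P_def by simp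
    have r: "0 \<le> r" "r \<le> P" "r \<le> a"
      unfolding r_def P_def using N by (simp_all add: less_imp_le flip: of_nat_power)
    have "cut_layer N k a = r * ((P - r) / P)"
      unfolding cut_layer_def r_def P_def by simp
    also have "\<dots> \<le> r * 1"
      using r P by (intro mult_left_mono) auto
    finally have "cut_layer N k a \<le> r" by simp
    moreover have "P \<le> real N ^ m" if "k \<le> m"
      unfolding P_def using that \<open>real N \<ge> 2\<close> by (intro power_increasing) auto
    ultimately show ?thesis
      unfolding b_def using r by auto
  qed
  then have "(\<Sum>k = 1..n. cut_layer N k a) \<le> sum b {1..n}"
    by (intro sum_mono)
  also have "\<dots> = real m * real N ^ m + cut_layer N (m + 1) a + (real n - real m - 1) * a"
  proof -
    have "{1..n} = {1..m} \<union> {m + 1} \<union> {m + 2..n}" using mn by auto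
    then have "sum b {1..n} = sum b {1..m} + b (m + 1) + sum b {m + 2..n}"
      by (simp add: sum.union_disjoint)
    moreover have "sum b {1..m} = real m * real N ^ m" by (simp add: b_def)
    moreover have "sum b {m + 2..n} = (real n - real m - 1) * a"
      using mn by (simp add: b_def of_nat_diff)
    ultimately show ?thesis by (simp add: b_def)
  qed
  finally show ?thesis .
qed

lemma linear_minus_square_le:
  fixes r M \<alpha> :: real
  assumes "M > 0"
  shows "\<alpha> * r - r\<^sup>2 / M \<le> \<alpha>\<^sup>2 * M / 4"
proof -
  have "0 \<le> (r - \<alpha> * M / 2)\<^sup>2 / M" using assms by simp
  also have "\<dots> = r\<^sup>2 / M - \<alpha> * r + \<alpha>\<^sup>2 * M / 4"
    using assms by (simp add: power2_eq_square field_simps)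
  finally show ?thesis by simp
qed

lemma Ham_diff_segment_upper:
  fixes Jt \<alpha> :: real
  assumes N: "N \<ge> 2" and an: "a \<le> N ^ n" and mn: "m + 1 \<le> n" and Jt: "Jt > 0" and "\<alpha> \<le> 1"
  shows "Ham N n (\<lambda>i. Jt / real N ^ i) (Jt * (real n - real m - \<alpha>)) {1..a}
       - Ham N n (\<lambda>i. Jt / real N ^ i) (Jt * (real n - real m - \<alpha>)) {}
     \<le> Jt * (real m * real N ^ m + \<alpha>\<^sup>2 * real N ^ (m + 1) / 4)"
proof -
  define r where "r = real (a mod N ^ (m + 1))"
  define M where "M = real N ^ (m + 1)"
  have "M > 0" unfolding M_def using N by simp
  have "cut_layer N (m + 1) a - (1 - \<alpha>) * a \<le> \<alpha> * r - r\<^sup>2 / M"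
  proof -
    have "r \<le> a" unfolding r_def by simp
    then have "(1 - \<alpha>) * r \<le> (1 - \<alpha>) * a"
      using \<open>\<alpha> \<le> 1\<close> by (intro mult_left_mono) auto
    moreover have "cut_layer N (m + 1) a = r * (M - r) / M"
      unfolding cut_layer_def r_def M_def by simp
    then have "cut_layer N (m + 1) a = r - r\<^sup>2 / M"
      using \<open>M > 0\<close> by (simp add: field_simps power2_eq_square)
    ultimately show ?thesis by (simp add: algebra_simps)
  qed
  also have "\<dots> \<le> \<alpha>\<^sup>2 * M / 4"
    using \<open>M > 0\<close> by (rule linear_minus_square_le)
  finally have "real m * real N ^ m + cut_layer N (m + 1) a + (real n - real m - 1) * a
      - (real n - real m - \<alpha>) * a \<le> real m * real N ^ m + \<alpha>\<^sup>2 * M / 4"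
    by (simp add: algebra_simps)
  then have "(\<Sum>k = 1..n. cut_layer N k a) - (real n - real m - \<alpha>) * a
      \<le> real m * real N ^ m + \<alpha>\<^sup>2 * M / 4"
    using sum_cut_layers_le[OF N mn, of a] by linarith
  then have "Jt * ((\<Sum>k = 1..n. cut_layer N k a) - (real n - real m - \<alpha>) * a)
      \<le> Jt * (real m * real N ^ m + \<alpha>\<^sup>2 * M / 4)"
    using Jt by (intro mult_left_mono) auto
  moreover have "{1..a} \<subseteq> lattice N n"
    using an unfolding lattice_def by auto
  then have "Ham N n (\<lambda>i. Jt / real N ^ i) (Jt * (real n - real m - \<alpha>)) {1..a}
       - Ham N n (\<lambda>i. Jt / real N ^ i) (Jt * (real n - real m - \<alpha>)) {}
     = (\<Sum>(v, w)\<in>{1..a} \<times> (lattice N n - {1..a}). Jt / real N ^ hdist N v w)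
       - Jt * ((real n - real m - \<alpha>) * a)"
    by (simp add: Ham_diff_empty mult.assoc)
  ultimately show ?thesis
    using segment_boundary_sum_le_cut_layers[OF N an, of Jt] Jt
    unfolding M_def right_diff_distrib by linarith
qed

lemma ex_list_eq_of_unit_steps:
  fixes f :: "'a \<Rightarrow> nat"
  assumes "xs \<noteq> []" and steps: "\<And>i. Suc i < length xs \<Longrightarrow> f (xs ! Suc i) \<le> f (xs ! i) + 1"
    and "f (hd xs) \<le> c" "c \<le> f (last xs)"
  shows "\<exists>x\<in>set xs. f x = c"
proof -
  define P where "P i \<longleftrightarrow> i < length xs \<and> c \<le> f (xs ! i)" for i
  define i where "i = (LEAST i. P i)"
  have "P (length xs - 1)"
    using assms(1,4) by (simp add: P_def last_conv_nth)
  then have Pi: "P i"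
    unfolding i_def by (rule LeastI)
  \<comment> \<open>at the first index where f reaches c it cannot have jumped over c\<close>
  have "f (xs ! i) \<le> c"
  proof (cases i)
    case 0
    then show ?thesis using assms(1,3) by (simp add: hd_conv_nth)
  next
    case (Suc j)
    then have "\<not> P j"
      using not_less_Least[of j P] unfolding i_def by simp
    moreover have "j < length xs"
      using Pi Suc unfolding P_def by simp
    ultimately have "f (xs ! j) < c"
      unfolding P_def by simp
    moreover have "f (xs ! i) \<le> f (xs ! j) + 1"
      using steps[of j] Pi Suc unfolding P_def by simp
    ultimately show ?thesis by simp
  qed
  then show ?thesis
    using Pi unfolding P_def by (intro bexI[of _ "xs ! i"]) auto
qed

lemma card_path_step:
  assumes "is_path N n A B p" "Suc i < length p"
  shows "card (p ! Suc i) \<le> card (p ! i) + 1"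
proof -
  obtain v where v: "p ! Suc i = p ! i - {v} \<union> ({v} - p ! i)"
    using assms unfolding is_path_def by blast
  have "p ! i \<subseteq> lattice N n"
    using assms unfolding is_path_def by simp
  then have "finite (p ! i)"
    by (rule finite_subset) simp
  have "card (p ! i - {v} \<union> ({v} - p ! i)) \<le> card (p ! i - {v}) + card ({v} - p ! i)"
    by (rule card_Un_le)
  also have "\<dots> \<le> card (p ! i) + 1"
    using \<open>finite (p ! i)\<close> by (intro add_mono card_mono) (auto simp: card_le_Suc0_iff_eq)
  finally show ?thesis using v by simp
qed

lemma path_meets_card:
  assumes "is_path N n {} (lattice N n) p" "c \<le> N ^ n"
  shows "\<exists>C\<in>set p. card C = c"
  using assms card_path_step[OF assms(1)]
  by (intro ex_list_eq_of_unit_steps) (auto simp: is_path_def lattice_def)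

definition segment_path :: "nat \<Rightarrow> nat \<Rightarrow> nat set list" where
  "segment_path N n = map (\<lambda>a. {1..a}) [0..<Suc (N ^ n)]"

lemma is_path_segment_path: "is_path N n {} (lattice N n) (segment_path N n)"
proof -
  have len: "length (segment_path N n) = Suc (N ^ n)"
    by (simp add: segment_path_def)
  have nth: "segment_path N n ! i = {1..i}" if "i < Suc (N ^ n)" for i
    using that by (simp add: segment_path_def del: upt_Suc)
  show ?thesis
    unfolding is_path_def
  proof (intro conjI allI impI ballI)
    show ne: "segment_path N n \<noteq> []"
      using len by auto
    show "hd (segment_path N n) = {}"
      using nth[of 0] by (simp add: hd_conv_nth[OF ne])
    show "last (segment_path N n) = lattice N n"
      using len nth[of "N ^ n"] by (simp add: last_conv_nth[OF ne] lattice_def)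
  next
    fix C assume "C \<in> set (segment_path N n)"
    then show "C \<subseteq> lattice N n" by (auto simp: segment_path_def lattice_def)
  next
    fix i assume i: "Suc i < length (segment_path N n)"
    then have "segment_path N n ! Suc i = segment_path N n ! i - {Suc i} \<union> ({Suc i} - segment_path N n ! i)"
      using nth[of i] nth[of "Suc i"] len by auto
    moreover have "Suc i \<in> lattice N n"
      using i len by (simp add: lattice_def)
    ultimately show "\<exists>v\<in>lattice N n. segment_path N n ! Suc i
        = segment_path N n ! i - {v} \<union> ({v} - segment_path N n ! i)"
      by blast
  qed
qed

lemma Ham_le_Max_path:
  assumes "is_path N n A B p"
  shows "Ham N n J h A \<le> Max (Ham N n J h ` set p)"
proof -
  have "A \<in> set p"
    using assms unfolding is_path_def by (metis list.set_sel(1))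
  then show ?thesis by (intro Max_ge) auto
qed

lemma Phi_le_Max_path:
  assumes "is_path N n A B p"
  shows "Phi N n J h A B \<le> Max (Ham N n J h ` set p)"
  unfolding Phi_def
  using assms Ham_le_Max_path by (intro cInf_lower bdd_belowI[of _ "Ham N n J h A"]) auto

lemma Phi_ge:
  assumes "is_path N n A B p0"
    and "\<And>p. is_path N n A B p \<Longrightarrow> \<exists>C\<in>set p. c \<le> Ham N n J h C"
  shows "c \<le> Phi N n J h A B"
  unfolding Phi_def
proof (rule cInf_greatest)
  show "{Max (Ham N n J h ` set p) | p. is_path N n A B p} \<noteq> {}"
    using assms(1) by blast
next
  fix x assume "x \<in> {Max (Ham N n J h ` set p) | p. is_path N n A B p}"
  then obtain p where p: "is_path N n A B p" "x = Max (Ham N n J h ` set p)"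
    by blast
  then obtain C where "C \<in> set p" "c \<le> Ham N n J h C"
    using assms(2) by blast
  then show "c \<le> x"
    using p by (auto intro: order.trans Max_ge)
qed

lemma Gamma_star_upper:
  fixes Jt \<alpha> :: real
  assumes N: "N \<ge> 2" and mn: "m + 1 \<le> n" and Jt: "Jt > 0" and "\<alpha> \<le> 1"
  shows "Gamma_star N n (\<lambda>i. Jt / real N ^ i) (Jt * (real n - real m - \<alpha>))
     \<le> Jt * (real m * real N ^ m + \<alpha>\<^sup>2 * real N ^ (m + 1) / 4)"
proof -
  define J where "J = (\<lambda>i. Jt / real N ^ i)"
  define h where "h = Jt * (real n - real m - \<alpha>)"
  define U where "U = Jt * (real m * real N ^ m + \<alpha>\<^sup>2 * real N ^ (m + 1) / 4)"
  have "Ham N n J h C \<le> Ham N n J h {} + U" if "C \<in> set (segment_path N n)" for C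
  proof -
    have "C \<in> (\<lambda>a. {1..a}) ` {0..<Suc (N ^ n)}"
      using that unfolding segment_path_def by (simp del: upt_Suc)
    then obtain a where "a \<le> N ^ n" "C = {1..a}"
      by (auto simp: less_Suc_eq_le)
    then show ?thesis
      using Ham_diff_segment_upper[OF N _ mn Jt \<open>\<alpha> \<le> 1\<close>] unfolding J_def h_def U_def by force
  qed
  then have "Max (Ham N n J h ` set (segment_path N n)) \<le> Ham N n J h {} + U"
    by (intro Max.boundedI) (auto simp: segment_path_def simp del: upt_Suc)
  moreover have "Phi N n J h {} (lattice N n) \<le> Max (Ham N n J h ` set (segment_path N n))"
    by (rule Phi_le_Max_path[OF is_path_segment_path])
  ultimately show ?thesis
    unfolding Gamma_star_def J_def h_def U_def by simp
qed

lemma Gamma_star_lower: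
  fixes Jt \<alpha> :: real and c :: nat
  assumes N: "N \<ge> 2" and mn: "m + 1 \<le> n" and Jt: "Jt > 0" and c: "c \<le> N ^ (m + 1)"
  shows "Jt * c * (\<alpha> - c / real N ^ (m + 1) - 2 * real n / real N)
     \<le> Gamma_star N n (\<lambda>i. Jt / real N ^ i) (Jt * (real n - real m - \<alpha>))"
proof -
  define J where "J = (\<lambda>i. Jt / real N ^ i)"
  define h where "h = Jt * (real n - real m - \<alpha>)"
  have "N ^ (m + 1) \<le> N ^ n"
    using N mn by (intro power_increasing) auto
  then have "c \<le> N ^ n" using c by linarith
  have "Ham N n J h {} + Jt * c * (\<alpha> - c / real N ^ (m + 1) - 2 * real n / real N) \<le> Phi N n J h {} (lattice N n)"
  proof (rule Phi_ge[OF is_path_segment_path])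
    fix p assume p: "is_path N n {} (lattice N n) p"
    then obtain C where C: "C \<in> set p" "card C = c"
      using path_meets_card \<open>c \<le> N ^ n\<close> by blast
    then have "C \<subseteq> lattice N n"
      using p unfolding is_path_def by blast
    then show "\<exists>C\<in>set p. Ham N n J h {} + Jt * c * (\<alpha> - c / real N ^ (m + 1) - 2 * real n / real N)
        \<le> Ham N n J h C"
      using C Ham_diff_lower[OF N _ _ mn Jt, of C \<alpha>] c unfolding J_def h_def by force
  qed
  then show ?thesis
    unfolding Gamma_star_def J_def h_def by simp
qed

lemma Gamma_star_upper_ratio:
  fixes Jt \<alpha> :: real
  assumes N: "N \<ge> 2" and mn: "m + 1 \<le> n" and Jt: "Jt > 0" and \<alpha>: "0 < \<alpha>" "\<alpha> \<le> 1"
  shows "Gamma_star N n (\<lambda>i. Jt / real N ^ i) (Jt * (real n - real m - \<alpha>))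
     \<le> Jt / 4 * \<alpha>\<^sup>2 * real N ^ (m + 1) * (1 + 4 * real m / \<alpha>\<^sup>2 * (1 / real N))"
proof -
  have "real N > 0" using N by simp
  have "Gamma_star N n (\<lambda>i. Jt / real N ^ i) (Jt * (real n - real m - \<alpha>))
      \<le> Jt * (real m * real N ^ m + \<alpha>\<^sup>2 * real N ^ (m + 1) / 4)"
    by (rule Gamma_star_upper[OF N mn Jt \<alpha>(2)])
  also have "\<dots> = Jt / 4 * \<alpha>\<^sup>2 * real N ^ (m + 1) * (1 + 4 * real m / \<alpha>\<^sup>2 * (1 / real N))"
    using \<alpha>(1) \<open>real N > 0\<close> by (simp add: field_simps power2_eq_square)
  finally show ?thesis .
qed

lemma Gamma_star_lower_ratio:
  fixes Jt \<alpha> :: real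
  assumes N: "N \<ge> 2" "4 * real n \<le> \<alpha> * real N" and mn: "m + 1 \<le> n" and Jt: "Jt > 0"
    and \<alpha>: "0 < \<alpha>" "\<alpha> \<le> 1"
  shows "Jt / 4 * \<alpha>\<^sup>2 * real N ^ (m + 1) * ((1 - 2 / \<alpha> * (1 / real N)) * (1 - 4 * real n / \<alpha> * (1 / real N)))
     \<le> Gamma_star N n (\<lambda>i. Jt / real N ^ i) (Jt * (real n - real m - \<alpha>))"
proof -
  define M where "M = real N ^ (m + 1)"
  \<comment> \<open>the droplet size that maximises the bound of \<open>Gamma_star_lower\<close>\<close>
  define c where "c = nat \<lfloor>\<alpha> * M / 2\<rfloor>"
  define \<delta> where "\<delta> = \<alpha> / 2 - 2 * real n / real N"
  have Nr: "real N \<ge> 2" using N by simp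
  have "real N ^ 1 \<le> M"
    unfolding M_def using Nr by (intro power_increasing) auto
  then have NM: "real N \<le> M" by simp
  have c_eq: "real c = of_int \<lfloor>\<alpha> * M / 2\<rfloor>"
    unfolding c_def using \<alpha> NM Nr by simp
  have c_lo: "\<alpha> * M / 2 - 1 \<le> c" and c_hi: "c \<le> \<alpha> * M / 2"
    unfolding c_eq by linarith+
  have "\<alpha> * M \<le> 1 * M"
    using \<alpha>(2) NM Nr by (intro mult_right_mono) auto
  then have "real c \<le> real (N ^ (m + 1))"
    using c_hi unfolding M_def by simp
  then have "c \<le> N ^ (m + 1)" by (simp only: of_nat_le_iff)
  have \<delta>: "0 \<le> \<delta>"
    using N(2) \<alpha>(1) Nr unfolding \<delta>_def by (simp add: field_simps)
  have "Jt / 4 * \<alpha>\<^sup>2 * M * ((1 - 2 / \<alpha> * (1 / real N)) * (1 - 4 * real n / \<alpha> * (1 / real N)))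
      \<le> Jt / 4 * \<alpha>\<^sup>2 * M * ((1 - 2 / \<alpha> * (1 / M)) * (1 - 4 * real n / \<alpha> * (1 / real N)))"
  proof -
    have "2 / \<alpha> * (1 / M) \<le> 2 / \<alpha> * (1 / real N)"
      using NM Nr \<alpha>(1) by (intro mult_left_mono divide_left_mono) auto
    moreover have "0 \<le> 1 - 4 * real n / \<alpha> * (1 / real N)"
      using N(2) \<alpha>(1) Nr by (simp add: field_simps)
    ultimately show ?thesis
      using Jt NM Nr by (intro mult_left_mono mult_right_mono) auto
  qed
  also have "\<dots> = Jt * (\<alpha> * M / 2 - 1) * \<delta>"
    unfolding \<delta>_def using \<alpha>(1) NM Nr by (simp add: field_simps power2_eq_square)
  also have "\<dots> \<le> Jt * c * \<delta>"
    using c_lo \<delta> Jt by (intro mult_right_mono mult_left_mono) auto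
  also have "\<dots> \<le> Jt * c * (\<alpha> - c / M - 2 * real n / real N)"
    using c_hi NM Nr Jt unfolding \<delta>_def by (intro mult_left_mono) (auto simp: field_simps)
  also have "\<dots> \<le> Gamma_star N n (\<lambda>i. Jt / real N ^ i) (Jt * (real n - real m - \<alpha>))"
    unfolding M_def by (rule Gamma_star_lower[OF N(1) mn Jt \<open>c \<le> N ^ (m + 1)\<close>])
  finally show ?thesis unfolding M_def .
qed

lemma Gamma_star_ratio_bounds:
  fixes Jt \<alpha> :: real
  assumes N: "N \<ge> 2" "4 * real n \<le> \<alpha> * real N" and mn: "m + 1 \<le> n" and Jt: "Jt > 0"
    and \<alpha>: "0 < \<alpha>" "\<alpha> \<le> 1"
  defines "r \<equiv> Gamma_star N n (\<lambda>i. Jt / real N ^ i) (Jt * (real n - real m - \<alpha>))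
      / (Jt / 4 * \<alpha>\<^sup>2 * real N ^ (m + 1))"
  shows "(1 - 2 / \<alpha> * (1 / real N)) * (1 - 4 * real n / \<alpha> * (1 / real N)) \<le> r"
    and "r \<le> 1 + 4 * real m / \<alpha>\<^sup>2 * (1 / real N)"
proof -
  have pos: "Jt / 4 * \<alpha>\<^sup>2 * real N ^ (m + 1) > 0"
    using Jt \<alpha>(1) N(1) by simp
  show "(1 - 2 / \<alpha> * (1 / real N)) * (1 - 4 * real n / \<alpha> * (1 / real N)) \<le> r"
    using Gamma_star_lower_ratio[OF N mn Jt \<alpha>] unfolding r_def
    by (subst pos_le_divide_eq[OF pos]) (simp only: mult.commute)
  show "r \<le> 1 + 4 * real m / \<alpha>\<^sup>2 * (1 / real N)"
    using Gamma_star_upper_ratio[OF N(1) mn Jt \<alpha>] unfolding r_def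
    by (subst pos_divide_le_eq[OF pos]) (simp only: mult.commute)
qed

theorem corollary1p12:
  fixes n m :: nat and Jt \<alpha> :: real
  assumes "n \<ge> 1" and "Jt > 0" and "m \<le> n - 1" and "0 < \<alpha>" and "\<alpha> < 1"
  shows "(\<lambda>N::nat. Gamma_star N n (\<lambda>i. Jt / real N ^ i) (Jt * (real n - real m - \<alpha>)))
           \<sim>[at_top] (\<lambda>N::nat. Jt / 4 * \<alpha>\<^sup>2 * real N ^ (m + 1))"
proof (rule asymp_equivI')
  let ?r = "\<lambda>N. Gamma_star N n (\<lambda>i. Jt / real N ^ i) (Jt * (real n - real m - \<alpha>))
      / (Jt / 4 * \<alpha>\<^sup>2 * real N ^ (m + 1))"
  let ?lo = "\<lambda>N. (1 - 2 / \<alpha> * (1 / real N)) * (1 - 4 * real n / \<alpha> * (1 / real N))"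
  let ?up = "\<lambda>N. 1 + 4 * real m / \<alpha>\<^sup>2 * (1 / real N)"
  have mn: "m + 1 \<le> n" and \<alpha>: "0 < \<alpha>" "\<alpha> \<le> 1" using assms by auto
  have "\<forall>\<^sub>F N in sequentially. 2 \<le> N \<and> 4 * real n / \<alpha> \<le> real N"
    using eventually_ge_at_top filterlim_real_sequentially[unfolded filterlim_at_top]
    by (intro eventually_conj) auto
  then have "\<forall>\<^sub>F N in sequentially. 2 \<le> N \<and> 4 * real n \<le> \<alpha> * real N"
    by (rule eventually_mono) (use \<alpha>(1) in \<open>simp add: field_simps\<close>)
  then have "\<forall>\<^sub>F N in sequentially. ?lo N \<le> ?r N" "\<forall>\<^sub>F N in sequentially. ?r N \<le> ?up N"
    by (eventually_elim, use Gamma_star_ratio_bounds[OF _ _ mn assms(2) \<alpha>] in blast)+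
  moreover have "?lo \<longlonglongrightarrow> (1 - 2 / \<alpha> * 0) * (1 - 4 * real n / \<alpha> * 0)"
    "?up \<longlonglongrightarrow> 1 + 4 * real m / \<alpha>\<^sup>2 * 0"
    by (intro tendsto_intros)+
  then have "?lo \<longlonglongrightarrow> 1" "?up \<longlonglongrightarrow> 1"
    by simp_all
  ultimately show "?r \<longlonglongrightarrow> 1"
    by (rule tendsto_sandwich)
qed

end
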